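(* Let $\sigma_0,\sigma_\epsilon>0$, $\theta_0\in\mathbb{R}$, prior $\Theta\sim N(\theta_0,\sigma_0^2)$, signal $X=\Theta+\epsilon$ with $\epsilon\sim\mathrm{Cauchy}(0,\sigma_\epsilon)$ independent of $\Theta$, and let $\theta_1(x)=\mathbb{E}[\Theta\mid X=x]$. Then for large signals the shift is asymptotically $\theta_1(x)-\theta_0\approx\frac{2\sigma_0^2}{x-\theta_0}$, in the sense that $$\lim_{x-\theta_0\to+\infty}(x-\theta_0)\bigl(\theta_1(x)-\theta_0\bigr)=2\sigma_0^2 .$$
   Context: $\mathrm{Cauchy}(\mu,s)$ has density $t\mapsto\frac{1}{\pi s[1+((t-\mu)/s)^2]}$. The posterior mean is $\theta_1(x)=\frac{\int\theta f_\Theta(\theta)l_\epsilon(x-\theta)d\theta}{\int f_\Theta(\theta)l_\epsilon(x-\theta)d\theta}$. *)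

theory Defs
  imports "HOL-Probability.Probability"
begin

definition cauchy_density :: "real \<Rightarrow> real \<Rightarrow> real \<Rightarrow> real" where
  "cauchy_density \<mu> s t = 1 / (pi * s * (1 + ((t - \<mu>) / s)^2))"

text \<open>Posterior mean E[Theta | X = x] for X = Theta + eps, Theta with density fT,
  eps with density le, independent (Bayes formula).\<close>
definition posterior_mean :: "(real \<Rightarrow> real) \<Rightarrow> (real \<Rightarrow> real) \<Rightarrow> real \<Rightarrow> real" where
  "posterior_mean fT le x =
     (\<integral>\<theta>. \<theta> * fT \<theta> * le (x - \<theta>) \<partial>lborel) / (\<integral>\<theta>. fT \<theta> * le (x - \<theta>) \<partial>lborel)"

end

theory Submission
  imports Defs "HOL-Real_Asymp.Real_Asymp"
begin

(* Write f(u) for the prior density at theta0 + u and c for the Cauchy(0, s) density.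
  Substituting theta = theta0 + u, the shift theta1(theta0 + y) - theta0 is N(y) / D(y) with
  D(y) = int f(u) c(y - u) du and N(y) = int u f(u) c(y - u) du.  The Cauchy tail gives
  y^2 c(y - u) -> s / pi, hence y^2 D(y) -> (s / pi) int f.  Because f is centred,
  N(y) = int u f(u) (c(y - u) - c(y)) du, and y^3 (c(y - u) - c(y)) -> 2 u s / pi, hence
  y^3 N(y) -> (2 s / pi) int u^2 f.  Peetre's inequality supplies polynomial majorants, so both
  limits are dominated convergence once f has a finite sixth moment, and the quotient
  y (theta1 - theta0) = y^3 N / (y^2 D) tends to 2 int u^2 f / int f = 2 sigma0^2. *)

lemma cauchy_density_centered:
  assumes "s > 0"
  shows "cauchy_density 0 s t = s / (pi * (s\<^sup>2 + t\<^sup>2))"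
proof -
  have "pi * s * (1 + ((t - 0) / s)\<^sup>2) = pi * (s\<^sup>2 + t\<^sup>2) / s"
    using assms by (simp add: field_simps power2_eq_square)
  then show ?thesis
    by (simp add: cauchy_density_def)
qed

lemma cauchy_density_nonneg: "s > 0 \<Longrightarrow> 0 \<le> cauchy_density \<mu> s t"
  by (simp add: cauchy_density_def add_pos_nonneg less_imp_le)

lemma cauchy_density_le: "s > 0 \<Longrightarrow> cauchy_density \<mu> s t \<le> 1 / (pi * s)"
  unfolding cauchy_density_def
  by (intro divide_left_mono mult_pos_pos) (auto simp: add_pos_nonneg)

lemma borel_measurable_cauchy_density [measurable]: "cauchy_density \<mu> s \<in> borel_measurable borel"
  unfolding cauchy_density_def by measurable

lemma peetre_inequality: "y\<^sup>2 * s\<^sup>2 \<le> 2 * (s\<^sup>2 + u\<^sup>2) * (s\<^sup>2 + (y - u)\<^sup>2)" for y s u :: real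
proof -
  have "2 * (s\<^sup>2 + u\<^sup>2) * (s\<^sup>2 + (y - u)\<^sup>2) = y\<^sup>2 * s\<^sup>2 + (2 * s\<^sup>2 * s\<^sup>2 + s\<^sup>2 * (y - 2 * u)\<^sup>2 + 2 * u\<^sup>2 * (y - u)\<^sup>2)"
    by (simp add: algebra_simps power2_eq_square)
  then show ?thesis by simp
qed

lemma tendsto_square_mult_cauchy_density:
  assumes "s > 0"
  shows "((\<lambda>y. y\<^sup>2 * cauchy_density 0 s (y - u)) \<longlongrightarrow> s / pi) at_top"
  using assms unfolding cauchy_density_centered[OF assms] by real_asymp (simp add: field_simps)

lemma tendsto_cube_mult_cauchy_density_diff:
  assumes "s > 0"
  shows "((\<lambda>y. y ^ 3 * (cauchy_density 0 s (y - u) - cauchy_density 0 s y)) \<longlongrightarrow> 2 * u * s / pi) at_top"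
  using assms unfolding cauchy_density_centered[OF assms] by real_asymp (simp add: field_simps)

lemma square_mult_cauchy_density_le:
  assumes "s > 0"
  shows "y\<^sup>2 * cauchy_density 0 s (y - u) \<le> 2 * (s\<^sup>2 + u\<^sup>2) / (pi * s)"
proof -
  define A where "A = s\<^sup>2 + (y - u)\<^sup>2"
  have "A > 0"
    using assms by (simp add: A_def add_pos_nonneg)
  have "y\<^sup>2 * cauchy_density 0 s (y - u) = (y\<^sup>2 * s\<^sup>2) / (pi * s * A)"
    using assms by (simp add: cauchy_density_centered A_def power2_eq_square)
  also have "\<dots> \<le> (2 * (s\<^sup>2 + u\<^sup>2) * A) / (pi * s * A)"
    using peetre_inequality[of y s u] assms \<open>A > 0\<close> by (intro divide_right_mono) (simp_all add: A_def)
  also have "\<dots> = 2 * (s\<^sup>2 + u\<^sup>2) / (pi * s)"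
    using \<open>A > 0\<close> by simp
  finally show ?thesis .
qed

lemma cauchy_density_diff:
  assumes "s > 0"
  shows "cauchy_density 0 s (y - u) - cauchy_density 0 s y
    = s * u * (2 * y - u) / (pi * (s\<^sup>2 + (y - u)\<^sup>2) * (s\<^sup>2 + y\<^sup>2))"
proof -
  define A B where "A = s\<^sup>2 + (y - u)\<^sup>2" and "B = s\<^sup>2 + y\<^sup>2"
  have "A > 0" "B > 0"
    using assms by (simp_all add: A_def B_def add_pos_nonneg)
  then have "s / (pi * A) - s / (pi * B) = s * (B - A) / (pi * A * B)"
    by (simp add: field_simps)
  moreover have "B - A = u * (2 * y - u)"
    by (simp add: A_def B_def algebra_simps power2_eq_square)
  ultimately show ?thesis
    using assms by (simp add: cauchy_density_centered A_def B_def mult.assoc)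
qed

lemma cube_mult_cauchy_density_diff_le:
  assumes "s > 0" and "y \<ge> 1"
  shows "\<bar>u * (y ^ 3 * (cauchy_density 0 s (y - u) - cauchy_density 0 s y))\<bar>
    \<le> 2 * (3 * u\<^sup>2 + u ^ 4) * (s\<^sup>2 + u\<^sup>2) / (pi * s)"
proof -
  define A B where "A = s\<^sup>2 + (y - u)\<^sup>2" and "B = s\<^sup>2 + y\<^sup>2"
  have "A > 0" "B > 0"
    using assms by (simp_all add: A_def B_def add_pos_nonneg)
  have "2 * \<bar>u\<bar> \<le> 1 + u\<^sup>2"
    using sum_squares_ge_zero[of "\<bar>u\<bar> - 1" 0] by (simp add: power2_eq_square algebra_simps)
  also have "\<dots> \<le> y * (1 + u\<^sup>2)"
    using mult_right_mono[OF assms(2), of "1 + u\<^sup>2"] by simp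
  finally have "\<bar>2 * y - u\<bar> \<le> (3 + u\<^sup>2) * y"
    using assms(2) by (simp add: algebra_simps)
  then have "s\<^sup>2 * (\<bar>2 * y - u\<bar> * y ^ 3) \<le> s\<^sup>2 * ((3 + u\<^sup>2) * y * y ^ 3)"
    using assms by (intro mult_left_mono mult_right_mono) auto
  also have "\<dots> = (3 + u\<^sup>2) * ((y\<^sup>2 * s\<^sup>2) * y\<^sup>2)"
    by (simp add: algebra_simps power2_eq_square power3_eq_cube)
  also have "\<dots> \<le> (3 + u\<^sup>2) * ((2 * (s\<^sup>2 + u\<^sup>2) * A) * B)"
    using peetre_inequality[of y s u] \<open>A > 0\<close>
    by (intro mult_left_mono mult_mono[where c = "y\<^sup>2"]) (auto simp: A_def B_def)
  finally have key: "s\<^sup>2 * (\<bar>2 * y - u\<bar> * y ^ 3) \<le> (3 + u\<^sup>2) * (2 * (s\<^sup>2 + u\<^sup>2) * A * B)"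
    by (simp add: mult.assoc)
  have "\<bar>u * (y ^ 3 * (cauchy_density 0 s (y - u) - cauchy_density 0 s y))\<bar>
      = u\<^sup>2 * (s\<^sup>2 * (\<bar>2 * y - u\<bar> * y ^ 3)) / (pi * s * A * B)"
    unfolding cauchy_density_diff[OF assms(1)] A_def[symmetric] B_def[symmetric]
    using assms \<open>A > 0\<close> \<open>B > 0\<close> by (simp add: abs_mult power2_eq_square mult_ac)
  also have "\<dots> \<le> u\<^sup>2 * ((3 + u\<^sup>2) * (2 * (s\<^sup>2 + u\<^sup>2) * A * B)) / (pi * s * A * B)"
    using key assms \<open>A > 0\<close> \<open>B > 0\<close> by (intro divide_right_mono mult_left_mono) auto
  also have "\<dots> = 2 * (3 * u\<^sup>2 + u ^ 4) * (s\<^sup>2 + u\<^sup>2) / (pi * s)"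
    using assms \<open>A > 0\<close> \<open>B > 0\<close>
    by (simp add: divide_simps) (simp add: algebra_simps power2_eq_square power4_eq_xxxx)
  finally show ?thesis .
qed

lemma integrable_mult_cauchy_density:
  fixes g :: "real \<Rightarrow> real"
  assumes "s > 0" and "integrable lborel g"
  shows "integrable lborel (\<lambda>u. g u * cauchy_density 0 s (y - u))"
proof (rule Bochner_Integration.integrable_bound)
  show "integrable lborel (\<lambda>u. g u * (1 / (pi * s)))"
    using assms(2) by simp
  show "AE u in lborel. norm (g u * cauchy_density 0 s (y - u)) \<le> norm (g u * (1 / (pi * s)))"
    using assms(1) mult_left_mono[OF cauchy_density_le abs_ge_zero]
    by (intro AE_I2) (simp add: abs_mult cauchy_density_nonneg)
qed (use assms in measurable)

lemma tendsto_square_mult_cauchy_convolution: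
  fixes f :: "real \<Rightarrow> real"
  assumes "s > 0" and "\<And>u. f u \<ge> 0"
    and "integrable lborel f" and "integrable lborel (\<lambda>u. f u * u\<^sup>2)"
  shows "((\<lambda>y. y\<^sup>2 * (\<integral>u. f u * cauchy_density 0 s (y - u) \<partial>lborel)) \<longlongrightarrow> s / pi * (\<integral>u. f u \<partial>lborel)) at_top"
proof -
  have [measurable]: "f \<in> borel_measurable borel"
    using assms(3) by auto
  define w where "w u = f u * (2 * s / pi) + f u * u\<^sup>2 * (2 / (pi * s))" for u
  have "((\<lambda>y. \<integral>u. f u * (y\<^sup>2 * cauchy_density 0 s (y - u)) \<partial>lborel) \<longlongrightarrow> (\<integral>u. f u * (s / pi) \<partial>lborel)) at_top"
  proof (rule integral_dominated_convergence_at_top[where w = w])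
    show "integrable lborel w"
      unfolding w_def using assms(3,4) by (intro Bochner_Integration.integrable_add integrable_mult_left)
    show "AE u in lborel. ((\<lambda>y. f u * (y\<^sup>2 * cauchy_density 0 s (y - u))) \<longlongrightarrow> f u * (s / pi)) at_top"
      using assms(1) by (intro AE_I2 tendsto_mult_left tendsto_square_mult_cauchy_density)
    have "norm (f u * (y\<^sup>2 * cauchy_density 0 s (y - u))) \<le> w u" for y u
    proof -
      have "norm (f u * (y\<^sup>2 * cauchy_density 0 s (y - u))) = f u * (y\<^sup>2 * cauchy_density 0 s (y - u))"
        using assms(1,2) cauchy_density_nonneg by (simp add: abs_mult)
      also have "\<dots> \<le> f u * (2 * (s\<^sup>2 + u\<^sup>2) / (pi * s))"
        using assms(1,2) square_mult_cauchy_density_le by (intro mult_left_mono)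
      also have "\<dots> = w u"
        using assms(1) by (simp add: w_def field_simps power2_eq_square)
      finally show ?thesis .
    qed
    then show "\<forall>\<^sub>F y in at_top. AE u in lborel. norm (f u * (y\<^sup>2 * cauchy_density 0 s (y - u))) \<le> w u"
      by simp
  qed simp_all
  moreover have "(\<integral>u. f u * (y\<^sup>2 * cauchy_density 0 s (y - u)) \<partial>lborel)
      = y\<^sup>2 * (\<integral>u. f u * cauchy_density 0 s (y - u) \<partial>lborel)" for y
    by (simp add: mult.left_commute[of "f _"])
  ultimately show ?thesis
    by (simp add: mult_ac)
qed

lemma tendsto_cube_mult_cauchy_first_moment:
  fixes f :: "real \<Rightarrow> real"
  assumes "s > 0" and "\<And>u. f u \<ge> 0"
    and moments: "\<And>k. k \<le> 6 \<Longrightarrow> integrable lborel (\<lambda>u. f u * u ^ k)"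
    and centered: "(\<integral>u. f u * u \<partial>lborel) = 0"
  shows "((\<lambda>y. y ^ 3 * (\<integral>u. u * f u * cauchy_density 0 s (y - u) \<partial>lborel))
    \<longlongrightarrow> 2 * s / pi * (\<integral>u. f u * u\<^sup>2 \<partial>lborel)) at_top"
proof -
  have [measurable]: "f \<in> borel_measurable borel"
    using moments[of 0] by auto
  have first_moment: "integrable lborel (\<lambda>u. f u * u)"
    using moments[of 1] by simp
  let ?\<Delta> = "\<lambda>y u. y ^ 3 * (cauchy_density 0 s (y - u) - cauchy_density 0 s y)"
  have cube_mult_first_moment: "y ^ 3 * (\<integral>u. u * f u * cauchy_density 0 s (y - u) \<partial>lborel)
      = (\<integral>u. f u * (u * ?\<Delta> y u) \<partial>lborel)" for y
  proof -
    have "(\<integral>u. f u * u * (cauchy_density 0 s (y - u) - cauchy_density 0 s y) \<partial>lborel)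
        = (\<integral>u. f u * u * cauchy_density 0 s (y - u) \<partial>lborel) - (\<integral>u. f u * u * cauchy_density 0 s y \<partial>lborel)"
      unfolding right_diff_distrib
      by (intro Bochner_Integration.integral_diff integrable_mult_cauchy_density integrable_mult_left
          assms(1) first_moment)
    also have "\<dots> = (\<integral>u. u * f u * cauchy_density 0 s (y - u) \<partial>lborel)"
      using centered by (simp add: mult.commute[of "f _"])
    finally have "y ^ 3 * (\<integral>u. u * f u * cauchy_density 0 s (y - u) \<partial>lborel)
        = y ^ 3 * (\<integral>u. f u * u * (cauchy_density 0 s (y - u) - cauchy_density 0 s y) \<partial>lborel)"
      by simp
    also have "\<dots> = (\<integral>u. y ^ 3 * (f u * u * (cauchy_density 0 s (y - u) - cauchy_density 0 s y)) \<partial>lborel)"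
      by simp
    also have "\<dots> = (\<integral>u. f u * (u * ?\<Delta> y u) \<partial>lborel)"
      by (simp add: mult_ac)
    finally show ?thesis .
  qed
  define w where "w u = f u * u\<^sup>2 * (6 * s / pi) + f u * u ^ 4 * (6 / (pi * s) + 2 * s / pi)
    + f u * u ^ 6 * (2 / (pi * s))" for u
  have "((\<lambda>y. \<integral>u. f u * (u * ?\<Delta> y u) \<partial>lborel) \<longlongrightarrow> (\<integral>u. f u * (u * (2 * u * s / pi)) \<partial>lborel)) at_top"
  proof (rule integral_dominated_convergence_at_top[where w = w])
    show "integrable lborel w"
      unfolding w_def by (intro Bochner_Integration.integrable_add integrable_mult_left moments) simp_all
    show "AE u in lborel. ((\<lambda>y. f u * (u * ?\<Delta> y u)) \<longlongrightarrow> f u * (u * (2 * u * s / pi))) at_top"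
      using assms(1) by (intro AE_I2 tendsto_mult_left tendsto_cube_mult_cauchy_density_diff)
    have bound: "norm (f u * (u * ?\<Delta> y u)) \<le> w u" if "y \<ge> 1" for y u
    proof -
      have "norm (f u * (u * ?\<Delta> y u)) = f u * \<bar>u * ?\<Delta> y u\<bar>"
        using assms(2) by (simp add: abs_mult)
      also have "\<dots> \<le> f u * (2 * (3 * u\<^sup>2 + u ^ 4) * (s\<^sup>2 + u\<^sup>2) / (pi * s))"
        using assms(1,2) that by (intro mult_left_mono cube_mult_cauchy_density_diff_le)
      also have "\<dots> = w u"
        using assms(1) by (simp add: w_def field_simps power2_eq_square power4_eq_xxxx eval_nat_numeral)
      finally show ?thesis .
    qed
    show "\<forall>\<^sub>F y in at_top. AE u in lborel. norm (f u * (u * ?\<Delta> y u)) \<le> w u"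
      by (rule eventually_mono[OF eventually_ge_at_top[of 1]]) (intro AE_I2 bound)
  qed simp_all
  moreover have "(\<integral>u. f u * (u * (2 * u * s / pi)) \<partial>lborel) = 2 * s / pi * (\<integral>u. f u * u\<^sup>2 \<partial>lborel)"
    by (simp add: power2_eq_square mult_ac flip: integral_mult_right_zero)
  ultimately show ?thesis
    by (simp only: cube_mult_first_moment)
qed

lemma posterior_mean_translate:
  fixes f l :: "real \<Rightarrow> real"
  assumes "integrable lborel (\<lambda>u. f u * l (x - u))"
    and "integrable lborel (\<lambda>u. u * f u * l (x - u))"
    and "(\<integral>u. f u * l (x - u) \<partial>lborel) \<noteq> 0"
  shows "posterior_mean (\<lambda>\<theta>. f (\<theta> - a)) l (a + x) = a + posterior_mean f l x"
proof -
  have translate: "(\<integral>\<theta>. g \<theta> \<partial>lborel) = (\<integral>u. g (a + u) \<partial>lborel)" for g :: "real \<Rightarrow> real"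
    using lborel_integral_real_affine[of 1 g a] by simp
  have "(\<integral>\<theta>. \<theta> * f (\<theta> - a) * l (a + x - \<theta>) \<partial>lborel)
      = (\<integral>u. a * (f u * l (x - u)) + u * f u * l (x - u) \<partial>lborel)"
    by (subst translate) (simp add: algebra_simps)
  also have "\<dots> = a * (\<integral>u. f u * l (x - u) \<partial>lborel) + (\<integral>u. u * f u * l (x - u) \<partial>lborel)"
    using assms(1,2) by simp
  moreover have "(\<integral>\<theta>. f (\<theta> - a) * l (a + x - \<theta>) \<partial>lborel) = (\<integral>u. f u * l (x - u) \<partial>lborel)"
    by (subst translate) simp
  ultimately show ?thesis
    using assms(3) by (simp add: posterior_mean_def field_simps)
qed

lemma tendsto_posterior_mean_cauchy_location:
  fixes f :: "real \<Rightarrow> real"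
  assumes "s > 0" and "\<And>u. f u \<ge> 0"
    and moments: "\<And>k. k \<le> 6 \<Longrightarrow> integrable lborel (\<lambda>u. f u * u ^ k)"
    and centered: "(\<integral>u. f u * u \<partial>lborel) = 0"
    and mass: "(\<integral>u. f u \<partial>lborel) > 0"
  shows "((\<lambda>y. y * (posterior_mean (\<lambda>\<theta>. f (\<theta> - a)) (cauchy_density 0 s) (a + y) - a))
    \<longlongrightarrow> 2 * (\<integral>u. f u * u\<^sup>2 \<partial>lborel) / (\<integral>u. f u \<partial>lborel)) at_top"
proof -
  define D N where "D y = (\<integral>u. f u * cauchy_density 0 s (y - u) \<partial>lborel)"
    and "N y = (\<integral>u. u * f u * cauchy_density 0 s (y - u) \<partial>lborel)" for y
  have D_lim: "((\<lambda>y. y\<^sup>2 * D y) \<longlongrightarrow> s / pi * (\<integral>u. f u \<partial>lborel)) at_top"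
    unfolding D_def using assms(1,2) moments[of 0] moments[of 2]
    by (intro tendsto_square_mult_cauchy_convolution) simp_all
  have N_lim: "((\<lambda>y. y ^ 3 * N y) \<longlongrightarrow> 2 * s / pi * (\<integral>u. f u * u\<^sup>2 \<partial>lborel)) at_top"
    unfolding N_def using assms(1-4) by (rule tendsto_cube_mult_cauchy_first_moment)
  have int_D: "integrable lborel (\<lambda>u. f u * cauchy_density 0 s (y - u))" for y
    using assms(1) moments[of 0] by (intro integrable_mult_cauchy_density) simp_all
  have int_N: "integrable lborel (\<lambda>u. u * f u * cauchy_density 0 s (y - u))" for y
    using assms(1) moments[of 1] integrable_mult_cauchy_density[of s "\<lambda>u. f u * u"]
    by (simp add: mult.commute[of "f _"])
  have "\<forall>\<^sub>F y in at_top. y\<^sup>2 * D y > 0"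
    using assms(1) mass by (intro order_tendstoD(1)[OF D_lim]) simp
  then have "\<forall>\<^sub>F y in at_top. (y ^ 3 * N y) / (y\<^sup>2 * D y)
      = y * (posterior_mean (\<lambda>\<theta>. f (\<theta> - a)) (cauchy_density 0 s) (a + y) - a)"
  proof eventually_elim
    case (elim y)
    then have "y \<noteq> 0" "D y \<noteq> 0"
      by auto
    have "posterior_mean (\<lambda>\<theta>. f (\<theta> - a)) (cauchy_density 0 s) (a + y) = a + N y / D y"
      using posterior_mean_translate[OF int_D int_N, of y a] \<open>D y \<noteq> 0\<close>
      by (simp add: posterior_mean_def D_def N_def)
    then show ?case
      using \<open>y \<noteq> 0\<close> \<open>D y \<noteq> 0\<close> by (simp add: field_simps power2_eq_square power3_eq_cube)
  qed
  moreover have "((\<lambda>y. (y ^ 3 * N y) / (y\<^sup>2 * D y))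
      \<longlongrightarrow> (2 * s / pi * (\<integral>u. f u * u\<^sup>2 \<partial>lborel)) / (s / pi * (\<integral>u. f u \<partial>lborel))) at_top"
    using assms(1) mass by (intro tendsto_divide N_lim D_lim) simp
  ultimately show ?thesis
    using assms(1) by (simp add: tendsto_cong)
qed

theorem mainTheorem7:
  fixes \<sigma>0 \<sigma>\<epsilon> \<theta>0 :: real
  assumes "\<sigma>0 > 0" and "\<sigma>\<epsilon> > 0"
  shows "((\<lambda>y. y * (posterior_mean (normal_density \<theta>0 \<sigma>0) (cauchy_density 0 \<sigma>\<epsilon>) (\<theta>0 + y) - \<theta>0))
           \<longlongrightarrow> 2 * \<sigma>0^2) at_top"
proof -
  have prior: "normal_density \<theta>0 \<sigma>0 = (\<lambda>\<theta>. normal_density 0 \<sigma>0 (\<theta> - \<theta>0))"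
    by (simp add: normal_density_def fun_eq_iff)
  have "integrable lborel (\<lambda>u. normal_density 0 \<sigma>0 u * u ^ k)" for k
    using integrable_normal_moment[OF assms(1), where \<mu> = 0 and k = k] by simp
  moreover have "(\<integral>u. normal_density 0 \<sigma>0 u * u\<^sup>2 \<partial>lborel) = \<sigma>0\<^sup>2"
    using integral_normal_moment_even[of \<sigma>0 0 1] assms(1) by simp
  ultimately show ?thesis
    using tendsto_posterior_mean_cauchy_location[of \<sigma>\<epsilon> "normal_density 0 \<sigma>0" \<theta>0] assms
    by (simp add: prior integral_normal_moment_nz_1)
qed

end
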